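(* Let $b\ge2$ be an integer and let $w=d_1\dots d_p$ be a fixed block of $b$-ary digits with $p\ge1$. Let $u=d_1\dots d_{p-1}$ and $v=d_2\dots d_p$. Then the following identities of formal Laurent series in $t$ hold: $$(1-bt)\,t^{1-p}Z_w(v,0)=1-t^{2-p}Z_w(v,0,u),\qquad (1-bt)\,Z_w(0)=1-t\,Z_w(v,0).$$ Moreover, $Z_w(v,0)(b^{-1})=b$ and $Z_w(v,0,u)(b^{-1})=b^{2-p}$.
   Context: Strings are finite sequences over $\{0,\dots,b-1\}$, including the empty string $\epsilon$. $k_w(X)$ is the number of possibly overlapping occurrences of $w$ in $X$. $Z_w(0)=\sum_l N_w(0,l)t^l$, where $N_w(0,l)$ is the number of strings of length $l$ with $k_w(X)=0$. For strings $x,y$, $Z_w(x,0,y)=\sum_l c_lt^l$, where $c_l$ is the number of strings of length $l$ with $k_w=0$, prefix $x$ and suffix $y$. Also $Z_w(x,0)=Z_w(x,0,\epsilon)$. When $p=1$, $u=v=\epsilon$. *)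

theory Defs
  imports "HOL-Analysis.Analysis" "HOL-Computational_Algebra.Formal_Laurent_Series"
    "HOL-Library.Sublist"
begin

definition is_string :: "nat \<Rightarrow> nat list \<Rightarrow> bool" where
  "is_string b X \<longleftrightarrow> set X \<subseteq> {..<b}"

definition occ :: "nat list \<Rightarrow> nat list \<Rightarrow> nat" where
  "occ w X = card {i. i + length w \<le> length X \<and> take (length w) (drop i X) = w}"

definition cnt :: "nat \<Rightarrow> nat list \<Rightarrow> nat list \<Rightarrow> nat list \<Rightarrow> nat \<Rightarrow> nat" where
  "cnt b w x y l = card {X. is_string b X \<and> length X = l \<and> occ w X = 0
                            \<and> prefix x X \<and> suffix y X}"

definition Zxy :: "nat \<Rightarrow> nat list \<Rightarrow> nat list \<Rightarrow> nat list \<Rightarrow> real fps" where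
  "Zxy b w x y = Abs_fps (\<lambda>l. real (cnt b w x y l))"

definition Zx :: "nat \<Rightarrow> nat list \<Rightarrow> nat list \<Rightarrow> real fps" where
  "Zx b w x = Zxy b w x []"

definition Z0 :: "nat \<Rightarrow> nat list \<Rightarrow> real fps" where
  "Z0 b w = Zxy b w [] []"

end

theory Submission
  imports Defs
begin

text \<open>
  Let N(l), A(l), C(l) count the \<open>w\<close>-avoiding strings of length l that are arbitrary, that start
  with \<open>v\<close>, and that start with \<open>v\<close> and end with \<open>u\<close>. Prepending a digit to an avoider creates an
  occurrence of \<open>w\<close> exactly when the digit is \<open>d\<^sub>1\<close> and the avoider starts with \<open>v\<close>; appending a
  digit to an avoider starting with \<open>v\<close> creates one exactly when it ends with \<open>u\<close>. Hence
  b N(l) = N(l+1) + A(l) and, for l \<ge> p - 1, b A(l) = A(l+1) + C(l), while \<open>v\<close> is the only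
  avoider of length at most p - 1 starting with \<open>v\<close>: these are the two Laurent identities.
  Substituting t = 1/b into them is legitimate because N(l)/b^l tends to 0: the p digits that
  follow an avoider may form any block but \<open>w\<close>, so N(l+p) \<le> (b^p - 1) N(l).
\<close>

definition avoiders :: "nat \<Rightarrow> nat list \<Rightarrow> nat list \<Rightarrow> nat list \<Rightarrow> nat \<Rightarrow> nat list set" where
  "avoiders b w x y l =
     {X. is_string b X \<and> length X = l \<and> \<not> sublist w X \<and> prefix x X \<and> suffix y X}"

lemma occ_eq_0_iff_not_sublist: "occ w X = 0 \<longleftrightarrow> \<not> sublist w X"
proof -
  have fin: "finite {i. i + length w \<le> length X \<and> take (length w) (drop i X) = w}"
    by (rule finite_subset[of _ "{..length X}"]) auto
  have "(\<exists>i. i + length w \<le> length X \<and> take (length w) (drop i X) = w) \<longleftrightarrow> sublist w X"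
  proof
    assume "\<exists>i. i + length w \<le> length X \<and> take (length w) (drop i X) = w"
    then obtain i where "take (length w) (drop i X) = w" by blast
    moreover have "X = take i X @ take (length w) (drop i X) @ drop (length w) (drop i X)"
      by (metis append_take_drop_id)
    ultimately show "sublist w X" by (metis sublist_appendI)
  next
    assume "sublist w X"
    then obtain ps ss where "X = ps @ w @ ss" by (auto simp: sublist_def)
    then show "\<exists>i. i + length w \<le> length X \<and> take (length w) (drop i X) = w"
      by (intro exI[of _ "length ps"]) simp
  qed
  with fin show ?thesis unfolding occ_def by auto
qed

lemma cnt_eq_card_avoiders: "cnt b w x y l = card (avoiders b w x y l)"
  unfolding cnt_def avoiders_def occ_eq_0_iff_not_sublist ..

lemma finite_avoiders: "finite (avoiders b w x y l)"
  by (rule finite_subset[OF _ finite_lists_length_eq[of "{..<b}" l]])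
     (auto simp: avoiders_def is_string_def)

lemma avoiders_eq_empty_if_short: "l < length x \<Longrightarrow> avoiders b w x y l = {}"
  by (auto simp: avoiders_def dest: prefix_length_le)

lemma avoiders_drop1_length:
  assumes "w \<noteq> []" and "is_string b w"
  shows "avoiders b w (drop 1 w) [] (length w - 1) = {drop 1 w}"
proof -
  have "\<not> sublist w (drop 1 w)"
    using assms(1) sublist_length_le by fastforce
  moreover have "is_string b (drop 1 w)"
    using assms(2) by (auto simp: is_string_def dest: in_set_dropD)
  ultimately show ?thesis by (auto simp: avoiders_def prefix_def)
qed

lemma cnt_eq_0_if_short: "l < length x \<Longrightarrow> cnt b w x y l = 0"
  by (simp add: cnt_eq_card_avoiders avoiders_eq_empty_if_short)

lemma cnt_drop1_upto_length:
  assumes "w \<noteq> []" and "is_string b w" and "l \<le> length w - 1"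
  shows "cnt b w (drop 1 w) [] l = (if l = length w - 1 then 1 else 0)"
proof (cases "l = length w - 1")
  case True
  then show ?thesis using avoiders_drop1_length[OF assms(1,2)] by (simp add: cnt_eq_card_avoiders)
next
  case False
  with assms(3) show ?thesis by (simp add: cnt_eq_0_if_short)
qed

lemma cnt_le_cnt_Nil_Nil: "cnt b w x y l \<le> cnt b w [] [] l"
  unfolding cnt_eq_card_avoiders
  by (rule card_mono[OF finite_avoiders]) (auto simp: avoiders_def)

lemma cnt_Nil_Nil_0: "w \<noteq> [] \<Longrightarrow> cnt b w [] [] 0 = 1"
proof -
  assume "w \<noteq> []"
  then have "avoiders b w [] [] 0 = {[]}" by (auto simp: avoiders_def is_string_def)
  then show ?thesis by (simp add: cnt_eq_card_avoiders)
qed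

lemma Cons_image_avoiders:
  assumes "w \<noteq> []" and "is_string b w"
  shows "(\<lambda>(d, Y). d # Y) ` ({..<b} \<times> avoiders b w [] [] l)
    = avoiders b w [] [] (Suc l) \<union> Cons (hd w) ` avoiders b w (drop 1 w) [] l"
    (is "?f ` ({..<b} \<times> ?S l) = ?S (Suc l) \<union> Cons (hd w) ` ?V l")
proof -
  have w: "w = hd w # drop 1 w" using assms(1) by (cases w) auto
  have hd_w: "hd w < b" using assms by (cases w) (auto simp: is_string_def)
  show ?thesis
  proof (intro equalityI subsetI)
    fix Z assume "Z \<in> ?f ` ({..<b} \<times> ?S l)"
    then obtain d Y where Z: "Z = d # Y" "d < b" "Y \<in> ?S l" by auto
    show "Z \<in> ?S (Suc l) \<union> Cons (hd w) ` ?V l"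
    proof (cases "sublist w Z")
      case True
      then have "prefix w (d # Y)" using Z by (auto simp: sublist_Cons_right avoiders_def)
      then have "d = hd w" "prefix (drop 1 w) Y" using w by (metis Cons_prefix_Cons)+
      then show ?thesis using Z by (auto simp: avoiders_def)
    next
      case False
      then show ?thesis using Z by (auto simp: avoiders_def is_string_def)
    qed
  next
    fix Z assume "Z \<in> ?S (Suc l) \<union> Cons (hd w) ` ?V l"
    then obtain d Y where "Z = d # Y" "(d, Y) \<in> {..<b} \<times> ?S l"
    proof
      assume Z: "Z \<in> ?S (Suc l)"
      then obtain d Y where "Z = d # Y" by (cases Z) (auto simp: avoiders_def)
      with Z have "(d, Y) \<in> {..<b} \<times> ?S l"
        by (auto simp: avoiders_def is_string_def sublist_Cons_right)
      with \<open>Z = d # Y\<close> that show thesis by blast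
    next
      assume "Z \<in> Cons (hd w) ` ?V l"
      with hd_w that show thesis by (auto simp: avoiders_def)
    qed
    then show "Z \<in> ?f ` ({..<b} \<times> ?S l)" by (auto intro: rev_image_eqI)
  qed
qed

lemma cnt_prepend_recurrence:
  assumes "w \<noteq> []" and "is_string b w"
  shows "b * cnt b w [] [] l = cnt b w [] [] (Suc l) + cnt b w (drop 1 w) [] l"
proof -
  let ?S = "avoiders b w [] []" and ?V = "avoiders b w (drop 1 w) []"
  let ?f = "\<lambda>(d, Y). d # Y"
  have starts_with_w: "sublist w (hd w # Y)" if "Y \<in> ?V l" for Y
  proof -
    have "prefix (hd w # drop 1 w) (hd w # Y)" using that by (simp add: avoiders_def)
    then show ?thesis using assms(1) by (cases w) auto
  qed
  then have disj: "?S (Suc l) \<inter> Cons (hd w) ` ?V l = {}"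
    by (auto simp: avoiders_def)
  have "b * card (?S l) = card (?f ` ({..<b} \<times> ?S l))"
    by (simp add: card_image inj_on_def card_cartesian_product)
  also have "\<dots> = card (?S (Suc l)) + card (Cons (hd w) ` ?V l)"
    unfolding Cons_image_avoiders[OF assms]
    by (rule card_Un_disjoint[OF finite_avoiders _ disj]) (simp add: finite_avoiders)
  also have "card (Cons (hd w) ` ?V l) = card (?V l)"
    by (simp add: card_image)
  finally show ?thesis by (simp add: cnt_eq_card_avoiders)
qed

lemma snoc_image_avoiders:
  assumes "w \<noteq> []" and "is_string b w" and "length x \<le> l"
  shows "(\<lambda>(Y, d). Y @ [d]) ` (avoiders b w x [] l \<times> {..<b})
    = avoiders b w x [] (Suc l) \<union> (\<lambda>Y. Y @ [last w]) ` avoiders b w x (butlast w) l"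
proof -
  define u where "u = butlast w"
  define c where "c = last w"
  let ?S = "avoiders b w x []" and ?U = "avoiders b w x u"
  let ?f = "\<lambda>(Y, d). Y @ [d]"
  have w: "w = u @ [c]" using assms(1) unfolding u_def c_def by simp
  have c: "c < b" using assms(1,2) last_in_set unfolding c_def by (auto simp: is_string_def)
  show ?thesis unfolding u_def[symmetric] c_def[symmetric]
  proof (intro equalityI subsetI)
    fix Z assume "Z \<in> ?f ` (?S l \<times> {..<b})"
    then obtain Y d where Z: "Z = Y @ [d]" "d < b" "Y \<in> ?S l" by auto
    show "Z \<in> ?S (Suc l) \<union> (\<lambda>Y. Y @ [c]) ` ?U l"
    proof (cases "sublist w Z")
      case True
      moreover have "\<not> sublist w Y" using Z by (simp add: avoiders_def)
      ultimately have "suffix (u @ [c]) (Y @ [d])" using Z w by (simp add: sublist_snoc)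
      then have "d = c" "suffix u Y" by simp_all
      then show ?thesis using Z by (auto simp: avoiders_def)
    next
      case False
      then show ?thesis
        using Z by (auto simp: avoiders_def is_string_def intro: prefix_order.trans)
    qed
  next
    fix Z assume "Z \<in> ?S (Suc l) \<union> (\<lambda>Y. Y @ [c]) ` ?U l"
    then obtain Y d where "Z = Y @ [d]" "(Y, d) \<in> ?S l \<times> {..<b}"
    proof
      assume Z: "Z \<in> ?S (Suc l)"
      then have "Z \<noteq> []" by (auto simp: avoiders_def)
      then obtain Y d where Y: "Z = Y @ [d]" by (metis append_butlast_last_id)
      have "prefix x Y"
        using Z Y assms(3) by (auto simp: avoiders_def)
      with Z Y have "(Y, d) \<in> ?S l \<times> {..<b}"
        by (auto simp: avoiders_def is_string_def sublist_snoc)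
      with Y that show thesis by blast
    next
      assume "Z \<in> (\<lambda>Y. Y @ [c]) ` ?U l"
      with c that show thesis by (auto simp: avoiders_def)
    qed
    then show "Z \<in> ?f ` (?S l \<times> {..<b})" by (auto intro: rev_image_eqI)
  qed
qed

lemma cnt_append_recurrence:
  assumes "w \<noteq> []" and "is_string b w" and "length x \<le> l"
  shows "b * cnt b w x [] l = cnt b w x [] (Suc l) + cnt b w x (butlast w) l"
proof -
  let ?S = "avoiders b w x []" and ?U = "avoiders b w x (butlast w)"
  let ?f = "\<lambda>(Y, d). Y @ [d]" and ?g = "\<lambda>Y. Y @ [last w]"
  have ends_with_w: "sublist w (Y @ [last w])" if "Y \<in> ?U l" for Y
  proof -
    have "suffix (butlast w @ [last w]) (Y @ [last w])" using that by (simp add: avoiders_def)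
    then show ?thesis using assms(1) by simp
  qed
  then have disj: "?S (Suc l) \<inter> ?g ` ?U l = {}"
    by (auto simp: avoiders_def)
  have "b * card (?S l) = card (?f ` (?S l \<times> {..<b}))"
    by (simp add: card_image inj_on_def card_cartesian_product)
  also have "\<dots> = card (?S (Suc l)) + card (?g ` ?U l)"
    unfolding snoc_image_avoiders[OF assms]
    by (rule card_Un_disjoint[OF finite_avoiders _ disj]) (simp add: finite_avoiders)
  also have "card (?g ` ?U l) = card (?U l)"
    by (simp add: card_image inj_on_def)
  finally show ?thesis by (simp add: cnt_eq_card_avoiders)
qed

lemma cnt_add_length_le:
  assumes "is_string b w"
  shows "cnt b w [] [] (n + length w) \<le> (b ^ length w - 1) * cnt b w [] [] n"
proof -
  let ?S = "avoiders b w [] []"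
  define T where "T = {Y. set Y \<subseteq> {..<b} \<and> length Y = length w} - {w}"
  have card_T: "card T = b ^ length w - 1"
    using assms unfolding T_def
    by (subst card_Diff_singleton) (auto simp: card_lists_length_eq is_string_def)
  have fin_T: "finite T" unfolding T_def by (simp add: finite_lists_length_eq)
  let ?f = "\<lambda>Z. (take n Z, drop n Z)"
  have inj: "inj_on ?f (?S (n + length w))"
    by (rule inj_onI) (metis append_take_drop_id prod.inject)
  have "?f ` ?S (n + length w) \<subseteq> ?S n \<times> T"
  proof (rule image_subsetI)
    fix Z assume Z: "Z \<in> ?S (n + length w)"
    then have Z': "set Z \<subseteq> {..<b}" "length Z = n + length w" "\<not> sublist w Z"
      by (auto simp: avoiders_def is_string_def)
    have "\<not> sublist w (take n Z)"
      using Z'(3) by (metis append_take_drop_id sublist_append_rightI sublist_order.dual_order.trans)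
    moreover have "drop n Z \<noteq> w"
      using Z'(3) by (metis append_take_drop_id sublist_append_leftI)
    ultimately show "(take n Z, drop n Z) \<in> ?S n \<times> T" using Z'
      by (auto simp: avoiders_def T_def is_string_def dest: in_set_takeD in_set_dropD)
  qed
  then have "card (?S (n + length w)) \<le> card (?S n \<times> T)"
    by (rule card_inj_on_le[OF inj]) (simp add: finite_avoiders fin_T)
  then show ?thesis by (simp add: cnt_eq_card_avoiders card_cartesian_product card_T mult.commute)
qed

lemma fps_nth_one_minus_const_X_times:
  fixes F :: "'a::comm_ring_1 fps"
  shows "fps_nth ((1 - fps_const c * fps_X) * F) 0 = fps_nth F 0"
    and "fps_nth ((1 - fps_const c * fps_X) * F) (Suc n) = fps_nth F (Suc n) - c * fps_nth F n"
  by (simp_all add: left_diff_distrib mult.assoc)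

lemma Z0_recurrence:
  assumes "w \<noteq> []" and "is_string b w"
  shows "(1 - fps_const (real b) * fps_X) * Z0 b w = 1 - fps_X * Zx b w (drop 1 w)"
proof (rule fps_ext)
  fix n
  show "fps_nth ((1 - fps_const (real b) * fps_X) * Z0 b w) n
    = fps_nth (1 - fps_X * Zx b w (drop 1 w)) n"
  proof (cases n)
    case 0
    then show ?thesis
      using cnt_Nil_Nil_0[OF assms(1)] by (simp add: fps_nth_one_minus_const_X_times Z0_def Zxy_def)
  next
    case (Suc m)
    have "real b * real (cnt b w [] [] m)
      = real (cnt b w [] [] (Suc m)) + real (cnt b w (drop 1 w) [] m)"
      using cnt_prepend_recurrence[OF assms, of m] by (metis of_nat_add of_nat_mult)
    then show ?thesis by (simp add: Suc fps_nth_one_minus_const_X_times Z0_def Zx_def Zxy_def)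
  qed
qed

lemma Zx_recurrence:
  assumes "w \<noteq> []" and "is_string b w"
  shows "(1 - fps_const (real b) * fps_X) * Zx b w (drop 1 w)
    = fps_X ^ (length w - 1) - fps_X * Zxy b w (drop 1 w) (butlast w)"
proof (rule fps_ext)
  fix n
  let ?A = "\<lambda>l. real (cnt b w (drop 1 w) [] l)"
  let ?C = "\<lambda>l. real (cnt b w (drop 1 w) (butlast w) l)"
  show "fps_nth ((1 - fps_const (real b) * fps_X) * Zx b w (drop 1 w)) n
    = fps_nth (fps_X ^ (length w - 1) - fps_X * Zxy b w (drop 1 w) (butlast w)) n"
  proof (cases n)
    case 0
    then show ?thesis
      using cnt_drop1_upto_length[OF assms, of 0]
      by (simp add: fps_nth_one_minus_const_X_times Zx_def Zxy_def)
  next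
    case (Suc m)
    have "real b * ?A m + (if Suc m = length w - 1 then 1 else 0) = ?A (Suc m) + ?C m"
    proof (cases "length w - 1 \<le> m")
      case True
      then have "real b * ?A m = ?A (Suc m) + ?C m"
        using cnt_append_recurrence[OF assms] by (metis of_nat_add of_nat_mult length_drop)
      with True show ?thesis by simp
    next
      case False
      then show ?thesis
        using cnt_drop1_upto_length[OF assms, of m] cnt_drop1_upto_length[OF assms, of "Suc m"]
          cnt_eq_0_if_short[of m "drop 1 w"] by simp
    qed
    then show ?thesis
      by (simp add: Suc fps_nth_one_minus_const_X_times Zx_def Zxy_def)
  qed
qed

lemma fls_X_intpow_times_fls_X_power:
  "(fls_X_intpow i :: 'a::semiring_1 fls) * fls_X ^ n = fls_X_intpow (i + int n)"
  unfolding fls_X_power_conv_shift_1 by (subst fls_X_intpow_times_fls_X_intpow) simp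

lemma fls_one_minus_const_X_times_eq:
  fixes F G :: "'a::comm_ring_1 fps"
  assumes "(1 - fps_const c * fps_X) * F = fps_X ^ k - fps_X * G"
  shows "(1 - fls_const c * fls_X) * fls_X_intpow (- int k) * fps_to_fls F
    = 1 - fls_X_intpow (1 - int k) * fps_to_fls G"
proof -
  let ?P = "fls_X_intpow (- int k) :: 'a fls"
  have "?P * fls_X ^ k = 1"
    using fls_X_intpow_times_fls_X_power[of "- int k" k] by simp
  moreover have "?P * fls_X = fls_X_intpow (1 - int k)"
    using fls_X_intpow_times_fls_X_power[of "- int k" 1] by (simp add: add.commute)
  moreover have "(1 - fls_const c * fls_X) * fps_to_fls F = fls_X ^ k - fls_X * fps_to_fls G"
    using arg_cong[OF assms, of fps_to_fls] by (simp add: fls_times_fps_to_fls fps_to_fls_power)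
  then have "(1 - fls_const c * fls_X) * ?P * fps_to_fls F
    = ?P * fls_X ^ k - (?P * fls_X) * fps_to_fls G"
    by (metis (no_types, lifting) mult.assoc mult.commute right_diff_distrib)
  ultimately show ?thesis by simp
qed

lemma tendsto_0_if_decseq_contracting:
  fixes a :: "nat \<Rightarrow> real"
  assumes "decseq a" and "\<And>n. 0 \<le> a n" and "\<And>n. a (n + p) \<le> q * a n" and "q < 1"
  shows "a \<longlonglongrightarrow> 0"
proof -
  obtain L where L: "a \<longlonglongrightarrow> L"
    using decseq_convergent[OF assms(1)] assms(2) by blast
  have "0 \<le> L" using L assms(2) by (intro LIMSEQ_le_const) auto
  have "(\<lambda>n. a (n + p)) \<longlonglongrightarrow> L" using L by (rule LIMSEQ_ignore_initial_segment)
  moreover have "(\<lambda>n. q * a n) \<longlonglongrightarrow> q * L" using L by (intro tendsto_intros)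
  ultimately have "L \<le> q * L" by (rule LIMSEQ_le) (use assms(3) in auto)
  then have "(1 - q) * L \<le> 0" by (simp add: algebra_simps)
  with \<open>0 \<le> L\<close> assms(4) have "L = 0" by (simp add: mult_le_0_iff)
  with L show ?thesis by simp
qed

lemma cnt_Nil_Nil_scaled_tendsto_0:
  assumes "w \<noteq> []" and "is_string b w"
  shows "(\<lambda>n. real (cnt b w [] [] n) / real b ^ n) \<longlonglongrightarrow> 0"
proof (rule tendsto_0_if_decseq_contracting)
  let ?N = "\<lambda>n. real (cnt b w [] [] n)" and ?p = "length w"
  have "b > 0" using assms by (cases w) (auto simp: is_string_def)
  show "decseq (\<lambda>n. ?N n / real b ^ n)"
  proof (rule decseq_SucI)
    fix n
    have "?N (Suc n) \<le> real b * ?N n"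
      using cnt_prepend_recurrence[OF assms, of n] by (metis le_add1 of_nat_le_iff of_nat_mult)
    with \<open>b > 0\<close> show "?N (Suc n) / real b ^ Suc n \<le> ?N n / real b ^ n"
      by (simp add: field_simps)
  qed
  show "?N (n + ?p) / real b ^ (n + ?p) \<le> (1 - 1 / real b ^ ?p) * (?N n / real b ^ n)" for n
  proof -
    have "?N (n + ?p) \<le> real ((b ^ ?p - 1) * cnt b w [] [] n)"
      using cnt_add_length_le[OF assms(2), of n] of_nat_mono by blast
    also have "\<dots> = (real b ^ ?p - 1) * ?N n"
      using \<open>b > 0\<close> by simp
    finally have "?N (n + ?p) \<le> (real b ^ ?p - 1) * ?N n" .
    with \<open>b > 0\<close> show ?thesis by (simp add: field_simps power_add)
  qed
  show "1 - 1 / real b ^ ?p < 1" using \<open>b > 0\<close> by simp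
qed simp

lemma Zxy_scaled_tendsto_0:
  assumes "w \<noteq> []" and "is_string b w"
  shows "(\<lambda>n. fps_nth (Zxy b w x y) n * (1 / real b) ^ n) \<longlonglongrightarrow> 0"
proof (rule tendsto_sandwich[OF _ _ tendsto_const cnt_Nil_Nil_scaled_tendsto_0[OF assms]])
  show "\<forall>\<^sub>F n in sequentially. 0 \<le> fps_nth (Zxy b w x y) n * (1 / real b) ^ n"
    by (simp add: Zxy_def)
  show "\<forall>\<^sub>F n in sequentially.
    fps_nth (Zxy b w x y) n * (1 / real b) ^ n \<le> real (cnt b w [] [] n) / real b ^ n"
    using cnt_le_cnt_Nil_Nil[of b w x y]
    by (simp add: Zxy_def power_one_over divide_right_mono)
qed

text \<open>Summing the coefficients of \<open>(1 - c X) F\<close> against \<open>r ^ n = c ^ -n\<close> telescopes.\<close>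
lemma sums_one_minus_const_X_times:
  fixes F :: "'a::real_normed_field fps"
  assumes "c * r = 1" and "(\<lambda>n. fps_nth F n * r ^ n) \<longlonglongrightarrow> 0"
  shows "(\<lambda>n. fps_nth ((1 - fps_const c * fps_X) * F) n * r ^ n) sums 0"
proof -
  define g where "g n = (case n of 0 \<Rightarrow> 0 | Suc m \<Rightarrow> fps_nth F m * r ^ m)" for n
  have "g \<longlonglongrightarrow> 0"
    by (rule LIMSEQ_imp_Suc) (simp add: g_def assms(2))
  then have "(\<lambda>n. g (Suc n) - g n) sums 0"
    using telescope_sums[of g 0] by (simp add: g_def)
  moreover have "fps_nth ((1 - fps_const c * fps_X) * F) n * r ^ n = g (Suc n) - g n" for n
  proof (cases n)
    case (Suc m)
    have "c * r ^ Suc m = r ^ m" using assms(1) by (simp add: mult.assoc[symmetric])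
    then show ?thesis
      by (simp add: Suc g_def fps_nth_one_minus_const_X_times left_diff_distrib mult.assoc)
  qed (simp add: g_def fps_nth_one_minus_const_X_times)
  ultimately show ?thesis by simp
qed

lemma sums_of_one_minus_const_X_times_eq:
  fixes F G :: "'a::real_normed_field fps"
  assumes "c * r = 1" and "(1 - fps_const c * fps_X) * F = fps_X ^ k - fps_X * G"
    and "(\<lambda>n. fps_nth F n * r ^ n) \<longlonglongrightarrow> 0"
  shows "(\<lambda>n. fps_nth G n * r ^ n) sums (r ^ k * c)"
proof -
  have "r \<noteq> 0" using assms(1) by auto
  have "(\<lambda>n. fps_nth (fps_X ^ k - fps_X * G) n * r ^ n) sums 0"
    using sums_one_minus_const_X_times[OF assms(1,3)] unfolding assms(2) .
  moreover have "fps_nth (fps_X ^ k - fps_X * G) n * r ^ n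
    = (if n = k then r ^ k else 0) - fps_nth (fps_X * G) n * r ^ n" for n
    by (cases "n = k") (simp_all add: left_diff_distrib)
  ultimately have "(\<lambda>n. (if n = k then r ^ k else 0) - fps_nth (fps_X * G) n * r ^ n) sums 0"
    by simp
  from sums_diff[OF sums_single[of k "\<lambda>_. r ^ k"] this]
  have "(\<lambda>n. fps_nth (fps_X * G) n * r ^ n) sums r ^ k" by simp
  then have "(\<lambda>n. fps_nth (fps_X * G) (Suc n) * r ^ Suc n) sums r ^ k"
    by (subst sums_Suc_iff) simp
  then have "(\<lambda>n. r * (fps_nth G n * r ^ n)) sums r ^ k"
    by (simp add: mult_ac)
  from sums_mult_D[OF this \<open>r \<noteq> 0\<close>] show ?thesis
    using inverse_unique[of r c] assms(1) by (simp add: divide_inverse mult.commute)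
qed

lemma one_over_power_times_self:
  fixes x :: "'a::field"
  assumes "x \<noteq> 0"
  shows "(1 / x) ^ n * x = x powi (1 - int n)"
  using assms by (simp add: power_int_diff power_one_over)

theorem lemma5:
  fixes b :: nat and w :: "nat list"
  assumes "b \<ge> 2" and "w \<noteq> []" and "is_string b w"
  defines "p \<equiv> length w"
  defines "u \<equiv> take (p - 1) w"
  defines "v \<equiv> drop 1 w"
  defines "t \<equiv> (fls_X :: real fls)"
  shows "(1 - of_nat b * t) * fls_X_intpow (1 - int p) * fps_to_fls (Zx b w v)
           = 1 - fls_X_intpow (2 - int p) * fps_to_fls (Zxy b w v u)
         \<and> (1 - of_nat b * t) * fps_to_fls (Z0 b w) = 1 - t * fps_to_fls (Zx b w v)
         \<and> (\<lambda>l. fps_nth (Zx b w v) l * (1 / real b) ^ l) sums (real b)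
         \<and> (\<lambda>l. fps_nth (Zxy b w v u) l * (1 / real b) ^ l) sums (real b powi (2 - int p))"
proof -
  have p: "- int (p - 1) = 1 - int p" "1 - int (p - 1) = 2 - int p"
    using assms(2) unfolding p_def by (cases w; simp)+
  have br: "real b * (1 / real b) = 1" using assms(1) by simp
  have Zx_eq:
    "(1 - fps_const (real b) * fps_X) * Zx b w v = fps_X ^ (p - 1) - fps_X * Zxy b w v u"
    using Zx_recurrence[OF assms(2,3)] unfolding p_def u_def v_def butlast_conv_take .
  have Z0_eq: "(1 - fps_const (real b) * fps_X) * Z0 b w = fps_X ^ 0 - fps_X * Zx b w v"
    using Z0_recurrence[OF assms(2,3)] unfolding v_def by simp
  note tail = Zxy_scaled_tendsto_0[OF assms(2,3)]
  show ?thesis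
  proof (intro conjI)
    show "(1 - of_nat b * t) * fls_X_intpow (1 - int p) * fps_to_fls (Zx b w v)
      = 1 - fls_X_intpow (2 - int p) * fps_to_fls (Zxy b w v u)"
      using fls_one_minus_const_X_times_eq[OF Zx_eq] unfolding p by (simp add: t_def fls_of_nat)
    show "(1 - of_nat b * t) * fps_to_fls (Z0 b w) = 1 - t * fps_to_fls (Zx b w v)"
      using fls_one_minus_const_X_times_eq[OF Z0_eq]
      by (simp add: t_def fls_of_nat fls_X_conv_shift_1)
    show "(\<lambda>l. fps_nth (Zx b w v) l * (1 / real b) ^ l) sums (real b)"
      using sums_of_one_minus_const_X_times_eq[OF br Z0_eq tail[of "[]" "[]", folded Z0_def]]
      by simp
    show "(\<lambda>l. fps_nth (Zxy b w v u) l * (1 / real b) ^ l) sums (real b powi (2 - int p))"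
      using sums_of_one_minus_const_X_times_eq[OF br Zx_eq tail[of v "[]", folded Zx_def]]
        one_over_power_times_self[of "real b" "p - 1"] assms(1) unfolding p by simp
  qed
qed

end
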